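(* Let $0<A<1$ and define $g:\mathbb{R}\to\mathbb{R}$ by $g(x)=Ax+\log\big(1+A(e^{-x}-1)\big)$ and $f(x)=g(x)/x^2$ for $x\ne0$. Let $B$ be a nonnegative constant with $B>\log\big(\tfrac{A}{1-A}\big)$. Then for all $0<x\le B$, $$g(x)\ge\min\Big\{\lim_{y\to0}f(y),\,f(B)\Big\}\cdot x^2.$$ *)

theory Defs
  imports "HOL-Analysis.Analysis"
begin

definition gF :: "real \<Rightarrow> real \<Rightarrow> real" where
  "gF A x = A * x + ln (1 + A * (exp (- x) - 1))"

definition fF :: "real \<Rightarrow> real \<Rightarrow> real" where
  "fF A x = gF A x / x\<^sup>2"

end

theory Submission
  imports Defs "HOL-Real_Asymp.Real_Asymp"
begin

text \<open>With \<open>c\<close> the minimum on the right, put \<open>h t = g t - c t\<^sup>2\<close>. Then \<open>h 0 = h' 0 = 0\<close>,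
  \<open>h'' 0 = A (1 - A) - 2 c \<ge> 0\<close> and \<open>h B \<ge> 0\<close>. Since \<open>g'' = A (1 - A) / D\<close> with the convex
  function \<open>D t = (1 - A)\<^sup>2 e\<^sup>t + A\<^sup>2 e\<^sup>-\<^sup>t + 2 A (1 - A)\<close>, once \<open>h''\<close> is negative on \<open>[0, B]\<close>
  it stays negative. But if \<open>h x < 0\<close> for some \<open>0 < x < B\<close>, the mean value theorem gives points
  where \<open>h'\<close> is first negative and then positive, hence \<open>\<eta> < \<theta>\<close> with \<open>h'' \<eta> < 0 < h'' \<theta>\<close>.\<close>

lemma nonneg_if_second_deriv_quasiconcave:
  fixes h h' h'' :: "real \<Rightarrow> real"
  assumes deriv: "\<And>t. 0 \<le> t \<Longrightarrow> t \<le> B \<Longrightarrow> (h has_real_derivative h' t) (at t)"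
    and deriv2: "\<And>t. 0 \<le> t \<Longrightarrow> t \<le> B \<Longrightarrow> (h' has_real_derivative h'' t) (at t)"
    and "h 0 = 0" "h' 0 = 0" "0 \<le> h'' 0" "0 \<le> h B"
    and quasiconcave: "\<And>a b. 0 \<le> a \<Longrightarrow> a \<le> b \<Longrightarrow> b \<le> B \<Longrightarrow> min (h'' 0) (h'' b) \<le> h'' a"
    and "0 < x" "x \<le> B"
  shows "0 \<le> h x"
proof (rule ccontr)
  assume "\<not> 0 \<le> h x"
  then have hx: "h x < 0" by simp
  with assms have "x < B" by (cases "x = B") auto
  obtain \<xi> where \<xi>: "0 < \<xi>" "\<xi> < x" "h x - h 0 = (x - 0) * h' \<xi>"
    using MVT2[of 0 x h h'] deriv \<open>x < B\<close> \<open>0 < x\<close> by auto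
  with hx \<open>h 0 = 0\<close> have "h' \<xi> < 0" by (simp add: mult_less_0_iff)
  obtain \<eta> where \<eta>: "0 < \<eta>" "\<eta> < \<xi>" "h' \<xi> - h' 0 = (\<xi> - 0) * h'' \<eta>"
    using MVT2[of 0 \<xi> h' h''] deriv2 \<xi> \<open>x < B\<close> by auto
  with \<open>h' \<xi> < 0\<close> \<open>h' 0 = 0\<close> have "h'' \<eta> < 0" by (simp add: mult_less_0_iff)
  obtain \<zeta> where \<zeta>: "x < \<zeta>" "\<zeta> < B" "h B - h x = (B - x) * h' \<zeta>"
    using MVT2[of x B h h'] deriv \<open>x < B\<close> \<open>0 < x\<close> by auto
  with hx \<open>0 \<le> h B\<close> have "0 < (B - x) * h' \<zeta>" by linarith
  with \<open>x < B\<close> have "0 < h' \<zeta>" by (simp add: zero_less_mult_iff)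
  obtain \<theta> where \<theta>: "\<xi> < \<theta>" "\<theta> < \<zeta>" "h' \<zeta> - h' \<xi> = (\<zeta> - \<xi>) * h'' \<theta>"
    using MVT2[of \<xi> \<zeta> h' h''] deriv2 \<xi> \<zeta> by auto
  with \<open>h' \<xi> < 0\<close> \<open>0 < h' \<zeta>\<close> have "0 < (\<zeta> - \<xi>) * h'' \<theta>" by linarith
  with \<theta> have "0 < h'' \<theta>" by (simp add: zero_less_mult_iff)
  have "min (h'' 0) (h'' \<theta>) \<le> h'' \<eta>"
    using quasiconcave \<eta> \<theta> \<zeta> by simp
  with \<open>0 \<le> h'' 0\<close> \<open>0 < h'' \<theta>\<close> \<open>h'' \<eta> < 0\<close> show False by linarith
qed

definition gF_deriv :: "real \<Rightarrow> real \<Rightarrow> real" where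
  "gF_deriv A t = A - A * exp (- t) / (1 + A * (exp (- t) - 1))"

definition gF_deriv2 :: "real \<Rightarrow> real \<Rightarrow> real" where
  "gF_deriv2 A t = A * (1 - A) / ((1 - A)\<^sup>2 * exp t + A\<^sup>2 * exp (- t) + 2 * A * (1 - A))"

lemma gF_log_arg_pos:
  fixes A t :: real
  assumes "0 \<le> A" "A \<le> 1"
  shows "0 < 1 + A * (exp (- t) - 1)"
proof -
  have "1 + A * (exp (- t) - 1) = (1 - A) + A * exp (- t)" by (simp add: algebra_simps)
  moreover have "0 < (1 - A) + A * exp (- t)"
    using assms by (cases "A = 0") (auto intro: add_nonneg_pos)
  ultimately show ?thesis by simp
qed

lemma has_real_derivative_gF:
  assumes "0 \<le> A" "A \<le> 1"
  shows "(gF A has_real_derivative gF_deriv A t) (at t)"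
  unfolding gF_def[abs_def] gF_deriv_def
  using gF_log_arg_pos[OF assms, of t]
  by (auto intro!: derivative_eq_intros simp: algebra_simps)

lemma has_real_derivative_gF_deriv:
  assumes "0 \<le> A" "A \<le> 1"
  shows "(gF_deriv A has_real_derivative gF_deriv2 A t) (at t)"
proof -
  let ?d = "1 + A * (exp (- t) - 1)"
  have "0 < ?d" using gF_log_arg_pos[OF assms] .
  then have "(gF_deriv A has_real_derivative A * (1 - A) * exp (- t) / ?d\<^sup>2) (at t)"
    unfolding gF_deriv_def[abs_def]
    by (auto intro!: derivative_eq_intros simp: power2_eq_square algebra_simps minus_divide_left)
  moreover have "A * (1 - A) * exp (- t) / ?d\<^sup>2 = A * (1 - A) / (exp t * ?d\<^sup>2)"
    by (simp add: exp_minus field_simps)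
  moreover have "exp t * ?d\<^sup>2 = (1 - A)\<^sup>2 * exp t + A\<^sup>2 * exp (- t) + 2 * A * (1 - A)"
    by (simp add: exp_minus field_simps power2_eq_square)
  ultimately show ?thesis
    by (simp add: gF_deriv2_def)
qed

lemma gF_deriv2_zero: "gF_deriv2 A 0 = A * (1 - A)"
  by (simp add: gF_deriv2_def power2_eq_square algebra_simps)

lemma gF_deriv2_ge_min:
  assumes "0 \<le> A" "A \<le> 1" "0 \<le> a" "a \<le> b"
  shows "min (gF_deriv2 A 0) (gF_deriv2 A b) \<le> gF_deriv2 A a"
proof -
  define D where "D t = (1 - A)\<^sup>2 * exp t + A\<^sup>2 * exp (- t) + 2 * A * (1 - A)" for t
  have gF_deriv2_eq: "gF_deriv2 A t = A * (1 - A) / D t" for t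
    by (simp add: gF_deriv2_def D_def)
  have D_pos: "0 < D t" for t
  proof -
    have "0 < (1 - A)\<^sup>2 * exp t + A\<^sup>2 * exp (- t)"
      by (cases "A = 1") (simp_all add: add_pos_nonneg)
    moreover have "0 \<le> 2 * A * (1 - A)" using assms by simp
    ultimately show ?thesis by (simp add: D_def)
  qed
  have "convex_on {0..b} D"
    unfolding D_def by (intro f''_ge0_imp_convex derivative_eq_intros | simp)+
  then have "D a \<le> max (D 0) (D b)"
    using assms by (intro convex_on_le_max) auto
  then consider "D a \<le> D 0" | "D a \<le> D b" by linarith
  then show ?thesis
  proof cases
    case 1
    then have "gF_deriv2 A 0 \<le> gF_deriv2 A a"
      unfolding gF_deriv2_eq using assms D_pos by (intro divide_left_mono) auto
    then show ?thesis by simp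
  next
    case 2
    then have "gF_deriv2 A b \<le> gF_deriv2 A a"
      unfolding gF_deriv2_eq using assms D_pos by (intro divide_left_mono) auto
    then show ?thesis by simp
  qed
qed

lemma Lim_fF_at_0:
  assumes "0 \<le> A" "A \<le> 1"
  shows "Lim (at 0) (fF A) = A * (1 - A) / 2"
proof (rule tendsto_Lim)
  have "((\<lambda>x. (A * x + ln (1 + A * (exp (- x) - 1))) / x\<^sup>2) \<longlongrightarrow> A * (1 - A) / 2) (at 0)"
    using assms by (real_asymp simp: algebra_simps)
  then show "(fF A \<longlongrightarrow> A * (1 - A) / 2) (at 0)"
    by (simp add: fF_def[abs_def] gF_def)
qed simp

theorem lemmaF2:
  fixes A B x :: real
  assumes "0 < A" "A < 1"
    and "0 \<le> B" "B > ln (A / (1 - A))"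
    and "0 < x" "x \<le> B"
  shows "gF A x \<ge> min (Lim (at 0) (fF A)) (fF A B) * x\<^sup>2"
proof -
  define c where "c = min (A * (1 - A) / 2) (fF A B)"
  have A: "0 \<le> A" "A \<le> 1" using assms by simp_all
  have "0 \<le> gF A x - c * x\<^sup>2"
  proof (rule nonneg_if_second_deriv_quasiconcave[where B = B and x = x
        and h = "\<lambda>t. gF A t - c * t\<^sup>2" and h' = "\<lambda>t. gF_deriv A t - 2 * c * t"
        and h'' = "\<lambda>t. gF_deriv2 A t - 2 * c"])
    show "((\<lambda>t. gF A t - c * t\<^sup>2) has_real_derivative gF_deriv A t - 2 * c * t) (at t)" for t
      by (auto intro!: derivative_eq_intros has_real_derivative_gF[OF A])
    show "((\<lambda>t. gF_deriv A t - 2 * c * t) has_real_derivative gF_deriv2 A t - 2 * c) (at t)" for t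
      by (auto intro!: derivative_eq_intros has_real_derivative_gF_deriv[OF A])
    show "0 \<le> gF_deriv2 A 0 - 2 * c"
      by (simp add: gF_deriv2_zero c_def)
    have "c * B\<^sup>2 \<le> fF A B * B\<^sup>2"
      by (simp add: c_def mult_right_mono)
    also have "\<dots> = gF A B"
      using assms by (simp add: fF_def)
    finally show "0 \<le> gF A B - c * B\<^sup>2" by simp
    show "min (gF_deriv2 A 0 - 2 * c) (gF_deriv2 A b - 2 * c) \<le> gF_deriv2 A a - 2 * c"
      if "0 \<le> a" "a \<le> b" for a b
      using gF_deriv2_ge_min[OF A that] by linarith
  qed (use assms in \<open>simp_all add: gF_def gF_deriv_def\<close>)
  then show ?thesis
    unfolding Lim_fF_at_0[OF A] c_def by simp
qed

end
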